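(* Fix a positive integer $u$ and define $f:\mathbb Z_{\ge0}\times\mathbb R_{\ge0}\to\mathbb R$ by $f(p,q)=qu$ if $q\le\lfloor p/u\rfloor$; $f(p,q)=u\lfloor p/u\rfloor+u\left(\tfrac pu-\lfloor \tfrac pu\rfloor\right)\left(q-\lfloor p/u\rfloor\right)$ if $\lfloor p/u\rfloor<q<\lceil p/u\rceil$; and $f(p,q)=p$ if $q\ge\lceil p/u\rceil$. Then for each fixed $p\in\mathbb Z_{\ge0}$, the function $q\mapsto f(p,q)$ is concave on $\mathbb R_{\ge0}$, and for each fixed $q\in\mathbb R_{\ge0}$, the function $p\mapsto f(p,q)$ is concave on $\mathbb Z_{\ge0}$ (i.e. $2f(p,q)\ge f(p-1,q)+f(p+1,q)$ for all integers $p\ge1$). *)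

theory Defs
  imports "HOL-Analysis.Analysis"
begin

definition fpq :: "nat \<Rightarrow> nat \<Rightarrow> real \<Rightarrow> real" where
  "fpq u p q =
     (let a = real p / real u in
      if q \<le> of_int \<lfloor>a\<rfloor> then q * real u
      else if q < of_int \<lceil>a\<rceil> then
        real u * of_int \<lfloor>a\<rfloor> + real u * (a - of_int \<lfloor>a\<rfloor>) * (q - of_int \<lfloor>a\<rfloor>)
      else real p)"

end

theory Submission
  imports Defs
begin

text \<open>Scaling by u reduces f to f(p,q) = u g(p/u, q) with g(x,y) = n + (x - n)(y - n) when x and y lie
in the same unit cell [n, n+1), and g(x,y) = min x y otherwise. This g is symmetric, and for fixed x it is
the minimum of three affine functions of y (slopes 1, frac x and 0), hence concave. By symmetry it is also
concave in x, and composing with the linear map p \<mapsto> p/u gives the midpoint inequality in p.\<close>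

lemma concave_on_min:
  assumes "concave_on S f" and "concave_on S g"
  shows "concave_on S (\<lambda>x. min (f x) (g x))"
  unfolding concave_on_iff
proof (intro conjI ballI allI impI)
  show "convex S" using assms(1) by (rule concave_on_imp_convex)
next
  fix x y and u v :: real
  assume "x \<in> S" "y \<in> S" "0 \<le> u" "0 \<le> v" "u + v = 1"
  then have "u * f x + v * f y \<le> f (u *\<^sub>R x + v *\<^sub>R y)" "u * g x + v * g y \<le> g (u *\<^sub>R x + v *\<^sub>R y)"
    using assms by (auto simp: concave_on_iff)
  moreover have "u * min (f x) (g x) + v * min (f y) (g y) \<le> min (u * f x + v * f y) (u * g x + v * g y)"
    using \<open>0 \<le> u\<close> \<open>0 \<le> v\<close> by (auto intro!: add_mono mult_left_mono)
  ultimately show "u * min (f x) (g x) + v * min (f y) (g y) \<le> min (f (u *\<^sub>R x + v *\<^sub>R y)) (g (u *\<^sub>R x + v *\<^sub>R y))"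
    by linarith
qed

lemma concave_on_real_affine:
  assumes "convex S"
  shows "concave_on S (\<lambda>x::real. a * x + b)"
  using assms unfolding concave_on_iff
  by (auto simp: algebra_simps simp flip: distrib_left distrib_right)

definition cell_min :: "real \<Rightarrow> real \<Rightarrow> real" where
  "cell_min x y = (if \<lfloor>x\<rfloor> = \<lfloor>y\<rfloor> then \<lfloor>x\<rfloor> + frac x * frac y else min x y)"

lemma cell_min_commute: "cell_min x y = cell_min y x"
  by (auto simp: cell_min_def)

lemma cell_min_eq_min_affine:
  fixes x y :: real
  shows "cell_min x y = min y (min (\<lfloor>x\<rfloor> + frac x * (y - \<lfloor>x\<rfloor>)) x)"
proof -
  have t: "0 \<le> frac x" "frac x < 1" by (simp_all add: frac_lt_1)
  have x: "x = \<lfloor>x\<rfloor> + frac x" by (simp add: frac_def)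
  consider "y < \<lfloor>x\<rfloor>" | "\<lfloor>y\<rfloor> = \<lfloor>x\<rfloor>" | "\<lfloor>x\<rfloor> + 1 \<le> y"
    by linarith
  then show ?thesis
  proof cases
    case 1
    then have "\<lfloor>y\<rfloor> \<noteq> \<lfloor>x\<rfloor>" by linarith
    moreover have "(1 - frac x) * (y - \<lfloor>x\<rfloor>) \<le> 0" using 1 t by (intro mult_nonneg_nonpos) auto
    ultimately show ?thesis using 1 t x by (simp add: cell_min_def min_def algebra_simps)
  next
    case 2
    then have y: "frac y = y - \<lfloor>x\<rfloor>" "0 \<le> y - \<lfloor>x\<rfloor>" "y - \<lfloor>x\<rfloor> < 1"
      by (simp_all add: frac_def) linarith+
    then have "cell_min x y = \<lfloor>x\<rfloor> + frac x * (y - \<lfloor>x\<rfloor>)" using 2 by (simp add: cell_min_def)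
    moreover have "(1 - frac x) * (y - \<lfloor>x\<rfloor>) \<ge> 0" using t y by simp
    moreover have "frac x * (y - \<lfloor>x\<rfloor>) \<le> frac x * 1" using t y by (intro mult_left_mono) auto
    ultimately show ?thesis using x by (simp add: min_def algebra_simps)
  next
    case 3
    then have "\<lfloor>y\<rfloor> \<noteq> \<lfloor>x\<rfloor>" by linarith
    moreover have "frac x * 1 \<le> frac x * (y - \<lfloor>x\<rfloor>)" using 3 t by (intro mult_left_mono) auto
    ultimately show ?thesis using 3 t x by (simp add: cell_min_def min_def)
  qed
qed

lemma fpq_eq_cell_min:
  assumes "u > 0"
  shows "fpq u p q = real u * cell_min (real p / real u) q"
proof -
  define a where "a = real p / real u"
  have p: "real p = real u * a" using assms by (simp add: a_def)
  have ceil_le: "\<lceil>a\<rceil> \<le> \<lfloor>a\<rfloor> + 1"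
    by (simp add: ceiling_le_iff)
  have frac_0: "frac a = 0" if "\<lceil>a\<rceil> \<le> \<lfloor>a\<rfloor>"
    using that le_of_int_ceiling[of a] by (simp add: frac_def) linarith
  have frac: "0 \<le> frac a" "frac a < 1" by (simp_all add: frac_lt_1)
  have a: "a = \<lfloor>a\<rfloor> + frac a" by (simp add: frac_def)
  have "fpq u p q = real u * (if q \<le> \<lfloor>a\<rfloor> then q
      else if q < \<lceil>a\<rceil> then \<lfloor>a\<rfloor> + frac a * (q - \<lfloor>a\<rfloor>) else a)"
    by (simp add: fpq_def a_def[symmetric] p frac_def algebra_simps Let_def)
  also have "\<dots> = real u * cell_min a q"
  proof -
    consider "q \<le> \<lfloor>a\<rfloor>" | "\<lfloor>a\<rfloor> < q" "q < \<lceil>a\<rceil>" | "\<lfloor>a\<rfloor> < q" "\<lceil>a\<rceil> \<le> q"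
      by linarith
    then show ?thesis
    proof cases
      case 1
      then have "(1 - frac a) * (q - \<lfloor>a\<rfloor>) \<le> 0" using frac by (intro mult_nonneg_nonpos) auto
      then have "q \<le> \<lfloor>a\<rfloor> + frac a * (q - \<lfloor>a\<rfloor>)" by (simp add: algebra_simps)
      moreover have "q \<le> a" using 1 by linarith
      ultimately show ?thesis using 1 by (simp add: cell_min_eq_min_affine)
    next
      case 2
      have "(1 - frac a) * (q - \<lfloor>a\<rfloor>) \<ge> 0" using 2 frac by simp
      moreover have "frac a * (q - \<lfloor>a\<rfloor>) \<le> frac a * 1"
        using 2 ceil_le frac by (intro mult_left_mono) auto
      ultimately have "\<lfloor>a\<rfloor> + frac a * (q - \<lfloor>a\<rfloor>) \<le> q" "\<lfloor>a\<rfloor> + frac a * (q - \<lfloor>a\<rfloor>) \<le> a"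
        using a by (simp_all add: algebra_simps)
      then show ?thesis using 2 by (simp add: cell_min_eq_min_affine min_def)
    next
      case 3
      have "frac a * 1 \<le> frac a * (q - \<lfloor>a\<rfloor>)"
      proof (cases "\<lceil>a\<rceil> \<le> \<lfloor>a\<rfloor>")
        case False
        then show ?thesis using 3 frac by (intro mult_left_mono) auto
      qed (simp add: frac_0)
      then have "a \<le> \<lfloor>a\<rfloor> + frac a * (q - \<lfloor>a\<rfloor>)" using a by simp
      moreover have "a \<le> q" using 3 le_of_int_ceiling[of a] by linarith
      ultimately show ?thesis using 3 by (simp add: cell_min_eq_min_affine min_def)
    qed
  qed
  finally show ?thesis by (simp add: a_def)
qed

lemma concave_on_cell_min:
  assumes "convex S"
  shows "concave_on S (cell_min x)"
proof -
  have "concave_on S (\<lambda>y. min (1 * y + 0) (min (frac x * y + (\<lfloor>x\<rfloor> - frac x * \<lfloor>x\<rfloor>)) (0 * y + x)))"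
    using assms by (intro concave_on_min concave_on_real_affine)
  then show ?thesis
    unfolding cell_min_eq_min_affine[abs_def] by (simp add: algebra_simps)
qed

theorem claim1:
  fixes u :: nat
  assumes "u > 0"
  shows "(\<forall>p::nat. concave_on {0..} (\<lambda>q. fpq u p q))
       \<and> (\<forall>q::real. q \<ge> 0 \<longrightarrow>
            (\<forall>p::nat. p \<ge> 1 \<longrightarrow> 2 * fpq u p q \<ge> fpq u (p - 1) q + fpq u (p + 1) q))"
proof (intro conjI allI impI)
  fix p :: nat
  have "concave_on {0..} (\<lambda>q. real u * cell_min (real p / real u) q)"
    by (intro concave_on_cmul concave_on_cell_min) (auto simp: convex_real_interval)
  then show "concave_on {0..} (\<lambda>q. fpq u p q)"
    by (simp add: fpq_eq_cell_min[OF assms])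
next
  fix q :: real and p :: nat
  assume "p \<ge> 1"
  have mid: "(1 - 1/2) *\<^sub>R (real (p - 1) / real u) + (1/2) *\<^sub>R (real (p + 1) / real u) = real p / real u"
    using \<open>p \<ge> 1\<close> by (simp add: of_nat_diff add_divide_distrib [symmetric])
  have "(1 - 1/2) * cell_min q (real (p - 1) / real u) + 1/2 * cell_min q (real (p + 1) / real u)
      \<le> cell_min q (real p / real u)"
    unfolding mid [symmetric] by (rule concave_onD [OF concave_on_cell_min [OF convex_UNIV]]) auto
  then have "real u * (cell_min q (real (p - 1) / real u) + cell_min q (real (p + 1) / real u))
      \<le> real u * (2 * cell_min q (real p / real u))"
    by (intro mult_left_mono) simp_all
  then show "2 * fpq u p q \<ge> fpq u (p - 1) q + fpq u (p + 1) q"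
    by (simp add: fpq_eq_cell_min [OF assms] cell_min_commute [of q] algebra_simps)
qed

end
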